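(* Let $D_{act} > 0$ be the duration of an activity period and $D_{sleep} \ge 0$ the duration of the sleep period, so that a duty cycle has duration $D_{act}+D_{sleep}$, and define the capacity $C_{RTXP} = \left\lfloor \frac{D_{act}+D_{sleep}}{D_{act}} \right\rfloor$. Let $n \in \mathbb{N}$ be a hop-count and let $p \in \mathbb{N}$ be the number of packets present in a 2-hop neighborhood of nodes at hop-count $n$ at the start of a duty cycle. Assume packets can be lost only through collisions, that coordinates are unique in every 2-hop neighborhood and the backoff function is bijective. If $p < C_{RTXP}$, then every one of these $p$ packets reaches a node at hop-count $n-1$ within at most one duty-cycle period.
   Context: Protocol model (RTXP): nodes are globally synchronized and duty-cycled. Each duty cycle consists of a sequence of activity periods, each of duration $D_{act}$, followed by sleeping, the total duty-cycle duration being $D_{act}+D_{sleep}$. In each activity period, nodes at hop-count $n$ (distance in hops to the sink) holding a packet contend for the channel in a backoff phase: each node's backoff time is $f(c)$ where $c$ is its virtual coordinate and $f$ a fixed function; the node whose backoff timer expires first sends a jamming code and wins; nodes detecting a jamming code earlier lose (2-hop interference model: nodes detect jamming codes of all nodes within two hops). The winner transmits its packet, which is received by neighbors at hop-count $n-1$, one of which forwards it. A node that loses the contention may request a further (secondary) activity period immediately following the current one, so that contention is repeated in successive activity periods until the end of the duty cycle. Thus in each activity period one packet in a 2-hop neighborhood wins the contention and makes one hop, and a duty cycle contains at most $C_{RTXP}$ activity periods. *)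

theory Defs
  imports Complex_Main
begin

definition C_RTXP :: "real \<Rightarrow> real \<Rightarrow> nat" where
  "C_RTXP Dact Dsleep = nat \<lfloor>(Dact + Dsleep) / Dact\<rfloor>"

text \<open>Node w wins the backoff contention among the contending nodes A: its backoff
  timer f (coord w) expires strictly first, so every other contender detects its
  jamming code earlier and loses.\<close>
definition backoff_winner ::
  "('node \<Rightarrow> 'c) \<Rightarrow> ('c \<Rightarrow> real) \<Rightarrow> 'node set \<Rightarrow> 'node \<Rightarrow> bool" where
  "backoff_winner coord f A w \<longleftrightarrow>
     w \<in> A \<and> (\<forall>v\<in>A. v \<noteq> w \<longrightarrow> f (coord w) < f (coord v))"

text \<open>An RTXP execution of one duty cycle in the 2-hop neighbourhood under consideration.
  pending k = packets still waiting at hop-count-n nodes at the start of activity period k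
  (period k occupies the time interval [k*Dact, (k+1)*Dact) of the duty cycle);
  holder q = node holding packet q; hop = hop-count of nodes;
  sender k / sent k / receiver k = winning node, transmitted packet and forwarding node
  of activity period k.
  In each of the C activity periods of the duty cycle: if the contention has a unique
  winner, the winner transmits one of its packets, which is received (without loss) by a
  neighbour at hop-count one less, and leaves the pending set; losers keep their packets
  (they request secondary activity periods).  If there is no unique winner (collision),
  packets may be lost: the pending set may shrink arbitrarily.\<close>
definition rtxp_run ::
  "nat \<Rightarrow> ('node \<Rightarrow> 'c) \<Rightarrow> ('c \<Rightarrow> real) \<Rightarrow> ('node \<Rightarrow> nat) \<Rightarrow> ('pkt \<Rightarrow> 'node) \<Rightarrow>
   'pkt set \<Rightarrow> (nat \<Rightarrow> 'pkt set) \<Rightarrow> (nat \<Rightarrow> 'node) \<Rightarrow> (nat \<Rightarrow> 'pkt) \<Rightarrow> (nat \<Rightarrow> 'node) \<Rightarrow> bool"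
  where
  "rtxp_run C coord f hop holder P pending sender sent receiver \<longleftrightarrow>
     pending 0 = P \<and>
     (\<forall>k<C.
        (pending k \<noteq> {} \<and> (\<exists>w. backoff_winner coord f (holder ` pending k) w) \<longrightarrow>
           backoff_winner coord f (holder ` pending k) (sender k) \<and>
           sent k \<in> pending k \<and> holder (sent k) = sender k \<and>
           hop (receiver k) = hop (sender k) - 1 \<and>
           pending (Suc k) = pending k - {sent k}) \<and>
        (\<not> (pending k \<noteq> {} \<and> (\<exists>w. backoff_winner coord f (holder ` pending k) w)) \<longrightarrow>
           pending (Suc k) \<subseteq> pending k))"

end

theory Submission
  imports Defs
begin

(* Inside one 2-hop neighbourhood, unique coordinates together with an
   injective backoff function make all backoff times of the contending holders distinct,
   so whenever some packet is pending the contention has a unique winner: there are no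
   collisions and no losses.  Hence every activity period removes exactly one pending
   packet by forwarding it to a node one hop closer to the sink, and after k periods
   exactly p - k of the original p packets are pending.  Since p < C_RTXP, all packets are
   gone after p periods; the period in which a given packet leaves the pending set is the
   one in which it was sent.  Finally, C_RTXP * Dact <= Dact + Dsleep, so every activity
   period of the duty cycle ends within the duty cycle. *)

lemma winner_exists:
  assumes "finite S" "S \<noteq> {}" "inj_on coord S" "inj f"
  shows "\<exists>w. backoff_winner coord f S w"
proof -
  obtain w where w: "w \<in> S" "\<forall>v\<in>S. f (coord w) \<le> f (coord v)"
  proof -
    let ?m = "Min ((\<lambda>x. f (coord x)) ` S)"
    have "?m \<in> (\<lambda>x. f (coord x)) ` S" using assms(1,2) by (intro Min_in) auto
    then obtain w where "w \<in> S" "f (coord w) = ?m" by auto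
    moreover have "\<forall>v\<in>S. ?m \<le> f (coord v)" using assms(1) by auto
    ultimately show ?thesis using that by metis
  qed
  have "f (coord w) < f (coord v)" if "v \<in> S" "v \<noteq> w" for v
  proof -
    have "f (coord v) \<noteq> f (coord w)"
      using that w(1) assms(3,4) by (meson inj_on_def injD)
    then show ?thesis using w(2) that(1) by force
  qed
  then show ?thesis using w(1) unfolding backoff_winner_def by blast
qed

lemma capacity_fits:
  assumes "Dact > 0" "Dsleep \<ge> 0"
  shows "real (C_RTXP Dact Dsleep) * Dact \<le> Dact + Dsleep"
proof -
  have "real (C_RTXP Dact Dsleep) = of_int \<lfloor>(Dact + Dsleep) / Dact\<rfloor>"
    unfolding C_RTXP_def using assms by simp
  also have "\<dots> \<le> (Dact + Dsleep) / Dact" by simp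
  finally show ?thesis using assms(1) by (simp add: pos_le_divide_eq)
qed

locale rtxp_contention =
  fixes C :: nat
    and coord :: "'node \<Rightarrow> 'c" and f :: "'c \<Rightarrow> real"
    and hop :: "'node \<Rightarrow> nat" and holder :: "'pkt \<Rightarrow> 'node"
    and P :: "'pkt set" and pending :: "nat \<Rightarrow> 'pkt set"
    and sender receiver :: "nat \<Rightarrow> 'node" and sent :: "nat \<Rightarrow> 'pkt"
  assumes run: "rtxp_run C coord f hop holder P pending sender sent receiver"
    and finite_P: "finite P"
    and unique_coord: "inj_on coord (holder ` P)"
    and inj_backoff: "inj f"
begin

lemma pending_0: "pending 0 = P"
  using run unfolding rtxp_run_def by simp

lemma step_empty:
  assumes "k < C" "pending k = {}"
  shows "pending (Suc k) = {}"
  using run assms unfolding rtxp_run_def by blast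

lemma step_send:
  assumes "k < C" "pending k \<subseteq> P" "pending k \<noteq> {}"
  shows "sent k \<in> pending k" "holder (sent k) = sender k"
    "hop (receiver k) = hop (sender k) - 1" "pending (Suc k) = pending k - {sent k}"
proof -
  have "\<exists>w. backoff_winner coord f (holder ` pending k) w"
    using assms(2,3) finite_P unique_coord inj_backoff
    by (intro winner_exists) (auto intro: finite_subset inj_on_subset)
  then show "sent k \<in> pending k" "holder (sent k) = sender k"
    "hop (receiver k) = hop (sender k) - 1" "pending (Suc k) = pending k - {sent k}"
    using run assms(1,3) unfolding rtxp_run_def by auto
qed

lemma pending_invariant:
  assumes "k \<le> C"
  shows "pending k \<subseteq> P \<and> card (pending k) = card P - k"
  using assms
proof (induction k)
  case 0
  then show ?case using pending_0 by simp
next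
  case (Suc k)
  then have sub: "pending k \<subseteq> P" and card: "card (pending k) = card P - k"
    and kC: "k < C" by auto
  have fin: "finite (pending k)" using sub finite_P finite_subset by blast
  show ?case
  proof (cases "pending k = {}")
    case True
    then show ?thesis using step_empty[OF kC] card by simp
  next
    case False
    then show ?thesis using step_send[OF kC sub False] sub card fin by auto
  qed
qed

lemma pending_drained:
  assumes "card P \<le> C"
  shows "pending (card P) = {}"
  using pending_invariant[OF assms] finite_P finite_subset by fastforce

lemma packet_delivered:
  assumes "card P \<le> C" "q \<in> P"
  obtains k where "k < card P" "sent k = q" "q \<in> pending k" "q \<notin> pending (Suc k)"
    "hop (receiver k) = hop (holder q) - 1"
proof -
  define j where "j = (LEAST j. q \<notin> pending j)"
  have gone: "q \<notin> pending (card P)" using pending_drained[OF assms(1)] by simp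
  have q_j: "q \<notin> pending j" unfolding j_def by (rule LeastI[of _ "card P"]) (fact gone)
  have j_le: "j \<le> card P" unfolding j_def by (rule Least_le) (fact gone)
  have "j \<noteq> 0"
  proof
    assume "j = 0"
    then show False using q_j pending_0 assms(2) by simp
  qed
  then obtain k where jk: "j = Suc k" by (cases j) auto
  have q_k: "q \<in> pending k" using not_less_Least[of k "\<lambda>j. q \<notin> pending j"] jk j_def by auto
  have k_lt: "k < card P" using jk j_le by simp
  have k_C: "k < C" using k_lt assms(1) by simp
  have sub: "pending k \<subseteq> P" using pending_invariant[of k] k_C by simp
  have nonempty: "pending k \<noteq> {}" using q_k by blast
  note step = step_send[OF k_C sub nonempty]
  have sent: "sent k = q" using step(4) q_k q_j jk by blast
  have "hop (receiver k) = hop (holder q) - 1" using step(2,3) sent by simp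
  then show ?thesis using that[OF k_lt sent q_k] q_j jk by simp
qed

end

theorem mainTheorem2:
  fixes Dact Dsleep :: real
    and n p :: nat
    and coord :: "'node \<Rightarrow> 'c" and f :: "'c \<Rightarrow> real"
    and hop :: "'node \<Rightarrow> nat" and holder :: "'pkt \<Rightarrow> 'node"
    and P :: "'pkt set"
    and pending :: "nat \<Rightarrow> 'pkt set"
    and sender receiver :: "nat \<Rightarrow> 'node" and sent :: "nat \<Rightarrow> 'pkt"
  assumes "Dact > 0" and "Dsleep \<ge> 0"
    and "finite P" and "card P = p"
    and "\<forall>q\<in>P. hop (holder q) = n"
    and "inj_on coord (holder ` P)"
    and "inj f"
    and "rtxp_run (C_RTXP Dact Dsleep) coord f hop holder P pending sender sent receiver"
    and "p < C_RTXP Dact Dsleep"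
  shows "\<forall>q\<in>P. \<exists>k < C_RTXP Dact Dsleep.
           sent k = q \<and> q \<in> pending k \<and> q \<notin> pending (Suc k) \<and>
           hop (receiver k) = n - 1 \<and>
           real (k + 1) * Dact \<le> Dact + Dsleep"
proof
  fix q assume q: "q \<in> P"
  let ?C = "C_RTXP Dact Dsleep"
  interpret rtxp_contention ?C coord f hop holder P pending sender receiver sent
    using assms(3,6,7,8) by unfold_locales
  obtain k where k: "k < p" "sent k = q" "q \<in> pending k" "q \<notin> pending (Suc k)"
    "hop (receiver k) = hop (holder q) - 1"
    using packet_delivered[OF _ q] assms(4,9) by (metis less_imp_le)
  have "real (k + 1) * Dact \<le> real ?C * Dact"
    using k(1) assms(1,9) by (intro mult_right_mono) auto
  also have "\<dots> \<le> Dact + Dsleep" using capacity_fits assms(1,2) .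
  finally have in_cycle: "real (k + 1) * Dact \<le> Dact + Dsleep" .
  have "k < ?C" using k(1) assms(9) by simp
  moreover have "hop (receiver k) = n - 1" using k(5) assms(5) q by simp
  ultimately show "\<exists>k < ?C. sent k = q \<and> q \<in> pending k \<and> q \<notin> pending (Suc k) \<and>
      hop (receiver k) = n - 1 \<and> real (k + 1) * Dact \<le> Dact + Dsleep"
    using k(2-4) in_cycle by blast
qed

end
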